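(* Uniformly in real $y \geq 1$ and positive integers $k$, \[ \sum_{\substack{d \leq y\\ (d,k) = 1}} \frac{\mu(d)\,t(d)^2}{d} = 1+o(1), \qquad x \to \infty.\]
   Context: $\mu$ is the Möbius function. Let $x$ be large and $\lambda = \sqrt{\log x \log\log x}$. Define the multiplicative function $r$ by $r(p) = \frac{\lambda}{\sqrt{p}\log p}$ for primes $\lambda^2 \le p \le \exp((\log\lambda)^2)$, $r(p)=0$ for other primes, and $r(p^n)=0$ for $n\ge2$. Define the multiplicative function $t$ by $t(p^n) = \frac{r(p^n)}{1+r(p^n)^2}$. *)

theory Defs
  imports "HOL-Computational_Algebra.Computational_Algebra"
begin

definition moebius_mu :: "nat \<Rightarrow> real" where
  "moebius_mu n = (if n = 0 then 0
     else if squarefree n then (-1) ^ card (prime_factors n) else 0)"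

definition lam :: "real \<Rightarrow> real" where
  "lam x = sqrt (ln x * ln (ln x))"

text \<open>Values of r on prime powers p^m (m >= 1).\<close>
definition r_pp :: "real \<Rightarrow> nat \<Rightarrow> nat \<Rightarrow> real" where
  "r_pp x p m = (if m = 1 \<and> (lam x)^2 \<le> real p \<and> real p \<le> exp ((ln (lam x))^2)
                 then lam x / (sqrt (real p) * ln (real p)) else 0)"

definition r_fun :: "real \<Rightarrow> nat \<Rightarrow> real" where
  "r_fun x n = (if n = 0 then 0
     else (\<Prod>p\<in>prime_factors n. r_pp x p (multiplicity p n)))"

definition t_fun :: "real \<Rightarrow> nat \<Rightarrow> real" where
  "t_fun x n = (if n = 0 then 0
     else (\<Prod>p\<in>prime_factors n.
              r_pp x p (multiplicity p n) / (1 + (r_pp x p (multiplicity p n))^2)))"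

end

theory Submission
  imports Defs "HOL-Real_Asymp.Real_Asymp"
begin

text \<open>
  Put a(p) = r(p)^2/p. Since 0 \<le> t \<le> r on primes and |\<mu>| \<le> 1, the term of a squarefree
  d > 1 is at most the product of a(p) over the primes p dividing d, and distinct squarefree d
  have distinct sets of prime divisors. So the sum differs from its term d = 1 by at most
  \<Prod>(1 + a(p)) - 1 \<le> exp(\<Sum> a(p)) - 1, uniformly in y and k. As r is supported on primes
  p \<ge> \<lambda>^2, where a(p) \<le> \<lambda>^2 / (p^2 (log \<lambda>^2)^2), we get \<Sum> a(p) \<le> 2 / (log \<lambda>^2)^2 \<rightarrow> 0.
\<close>

lemma squarefree_prod_prime_factors:
  fixes n :: nat
  assumes "squarefree n"
  shows "(\<Prod>p\<in>prime_factors n. p) = n"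
proof -
  have "n \<noteq> 0" using assms by (rule contrapos_pn) simp
  then have "(\<Prod>p\<in>prime_factors n. p) = (\<Prod>p\<in>prime_factors n. p ^ multiplicity p n)"
    using assms by (intro prod.cong) (auto simp: squarefree_factorial_semiring')
  also have "\<dots> = n" using \<open>n \<noteq> 0\<close> by (simp add: prod_prime_factors)
  finally show ?thesis .
qed

lemma inj_on_prime_factors_squarefree: "inj_on prime_factors {n :: nat. squarefree n}"
  by (rule inj_onI) (metis mem_Collect_eq squarefree_prod_prime_factors)

lemma sum_inverse_squares_le:
  fixes A :: "nat set" and L :: real
  assumes "finite A" "1 < L" "\<And>n. n \<in> A \<Longrightarrow> L \<le> real n"
  shows "(\<Sum>n\<in>A. 1 / real n ^ 2) \<le> 1 / (L - 1)"
proof -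
  define m where "m = nat \<lceil>L\<rceil> - 1"
  define N where "N = Max (insert m A)"
  have "L - 1 \<le> real m" "1 \<le> m" using assms(2) unfolding m_def by linarith+
  have "m \<le> N" unfolding N_def using assms(1) by simp
  have A_sub: "A \<subseteq> {Suc m..N}"
  proof
    fix n assume "n \<in> A"
    then have "Suc m \<le> n" using assms(2,3) unfolding m_def by (simp add: nat_le_iff ceiling_le_iff)
    moreover have "n \<le> N" using \<open>n \<in> A\<close> assms(1) unfolding N_def by simp
    ultimately show "n \<in> {Suc m..N}" by simp
  qed
  have "(\<Sum>n\<in>A. 1 / real n ^ 2) \<le> (\<Sum>n\<in>A. 1 / real (n - 1) - 1 / real n)"
  proof (rule sum_mono)
    fix n assume "n \<in> A"
    then have "2 \<le> n" using A_sub \<open>1 \<le> m\<close> by auto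
    then have "1 / real (n - 1) - 1 / real n = 1 / (real (n - 1) * real n)"
      by (simp add: field_simps of_nat_diff)
    also have "\<dots> \<ge> 1 / real n ^ 2"
      using \<open>2 \<le> n\<close> by (intro divide_left_mono) (auto simp: power2_eq_square)
    finally show "1 / real n ^ 2 \<le> 1 / real (n - 1) - 1 / real n" .
  qed
  also have "\<dots> \<le> (\<Sum>n\<in>{Suc m..N}. 1 / real (n - 1) - 1 / real n)"
    using A_sub \<open>1 \<le> m\<close> by (intro sum_mono2) (auto simp: frac_le)
  also have "\<dots> = 1 / real m - 1 / real N"
    using sum_telescope''[OF \<open>m \<le> N\<close>, of "\<lambda>n. - 1 / real n"] by simp
  also have "\<dots> \<le> 1 / real m"
    by simp
  also have "\<dots> \<le> 1 / (L - 1)"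
    using \<open>L - 1 \<le> real m\<close> assms(2) by (simp add: frac_le)
  finally show ?thesis .
qed

lemma sum_prod_le_exp_sum_minus_1:
  fixes a :: "'a \<Rightarrow> real" and F :: "'a set set"
  assumes "finite P" and a_nonneg: "\<And>p. 0 \<le> a p" and a_supp: "\<And>p. p \<notin> P \<Longrightarrow> a p = 0"
    and F: "\<And>S. S \<in> F \<Longrightarrow> finite S \<and> S \<noteq> {}"
  shows "(\<Sum>S\<in>F. \<Prod>p\<in>S. a p) \<le> exp (\<Sum>p\<in>P. a p) - 1"
proof -
  have "(\<Sum>S\<in>F. \<Prod>p\<in>S. a p) \<le> (\<Sum>S\<in>Pow P - {{}}. \<Prod>p\<in>S. a p)"
  proof (cases "finite F")
    case True
    have "(\<Sum>S\<in>F. \<Prod>p\<in>S. a p) = (\<Sum>S\<in>F \<inter> Pow P. \<Prod>p\<in>S. a p)"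
      using True F a_supp by (intro sum.mono_neutral_right) (auto intro!: prod_zero)
    also have "\<dots> \<le> (\<Sum>S\<in>Pow P - {{}}. \<Prod>p\<in>S. a p)"
      using assms(1) F a_nonneg by (intro sum_mono2) (auto intro: prod_nonneg)
    finally show ?thesis .
  qed (use a_nonneg in \<open>auto intro!: sum_nonneg prod_nonneg\<close>)
  also have "\<dots> = (\<Prod>p\<in>P. a p + 1) - 1"
    using assms(1) prod_add[OF assms(1), of a "\<lambda>_. 1"] by (simp add: sum_diff1)
  also have "(\<Prod>p\<in>P. a p + 1) \<le> (\<Prod>p\<in>P. exp (a p))"
    using a_nonneg by (intro prod_mono) (auto simp: add.commute)
  also have "\<dots> = exp (\<Sum>p\<in>P. a p)"
    using assms(1) by (simp add: exp_sum)
  finally show ?thesis by simp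
qed

lemma abs_moebius_mu_le_1: "\<bar>moebius_mu n\<bar> \<le> 1"
  by (simp add: moebius_mu_def)

lemma t_fun_squarefree:
  assumes "squarefree d"
  shows "t_fun x d = (\<Prod>p\<in>prime_factors d. r_pp x p 1 / (1 + r_pp x p 1 ^ 2))"
proof -
  have "d \<noteq> 0" using assms by (rule contrapos_pn) simp
  then show ?thesis
    using assms unfolding t_fun_def by (auto simp: squarefree_factorial_semiring' intro!: prod.cong)
qed

lemma abs_moebius_t_sq_div_le:
  "\<bar>moebius_mu d * t_fun x d ^ 2 / real d\<bar> \<le> (\<Prod>p\<in>prime_factors d. r_pp x p 1 ^ 2 / real p)"
proof (cases "squarefree d")
  case False
  then show ?thesis by (auto simp: moebius_mu_def intro!: prod_nonneg)
next
  case True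
  define q where "q p = r_pp x p 1 / (1 + r_pp x p 1 ^ 2)" for p
  have "\<bar>moebius_mu d * t_fun x d ^ 2 / real d\<bar> \<le> t_fun x d ^ 2 / real d"
    using abs_moebius_mu_le_1[of d] by (simp add: abs_mult divide_right_mono mult_left_le_one_le)
  also have "\<dots> = (\<Prod>p\<in>prime_factors d. q p) ^ 2 / (\<Prod>p\<in>prime_factors d. real p)"
    unfolding t_fun_squarefree[OF True] q_def of_nat_prod [symmetric]
      squarefree_prod_prime_factors[OF True] ..
  also have "\<dots> = (\<Prod>p\<in>prime_factors d. q p ^ 2 / real p)"
    by (simp add: prod_power_distrib prod_dividef)
  also have "\<dots> \<le> (\<Prod>p\<in>prime_factors d. r_pp x p 1 ^ 2 / real p)"
  proof (intro prod_mono conjI)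
    have "(r / (1 + r ^ 2)) ^ 2 \<le> r ^ 2" for r :: real
      by (simp add: power_divide divide_le_eq mult_le_cancel_left1 one_le_power)
    then show "q p ^ 2 / real p \<le> r_pp x p 1 ^ 2 / real p" for p
      unfolding q_def by (simp add: divide_right_mono)
  qed simp
  finally show ?thesis .
qed

lemma r_pp_sq_div_le:
  assumes "1 < lam x ^ 2" "lam x ^ 2 \<le> real p"
  shows "r_pp x p 1 ^ 2 / real p \<le> lam x ^ 2 / ln (lam x ^ 2) ^ 2 * (1 / real p ^ 2)"
proof (cases "real p \<le> exp (ln (lam x) ^ 2)")
  case False
  then show ?thesis by (simp add: r_pp_def)
next
  case True
  have "0 < ln (lam x ^ 2)"
    using assms(1) by (rule ln_gt_zero)
  have "ln (lam x ^ 2) \<le> ln (real p)"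
    using assms ln_le_cancel_iff[of "lam x ^ 2" "real p"] by linarith
  have "r_pp x p 1 ^ 2 / real p = lam x ^ 2 / ln (real p) ^ 2 * (1 / real p ^ 2)"
    using assms True by (simp add: r_pp_def power_divide power_mult_distrib power2_eq_square)
  also have "\<dots> \<le> lam x ^ 2 / ln (lam x ^ 2) ^ 2 * (1 / real p ^ 2)"
    using \<open>0 < ln (lam x ^ 2)\<close> \<open>ln (lam x ^ 2) \<le> ln (real p)\<close>
    by (intro mult_right_mono divide_left_mono power_mono) auto
  finally show ?thesis .
qed

lemma sum_r_pp_sq_div_le:
  assumes "2 \<le> lam x ^ 2" "finite P" "\<And>p. p \<in> P \<Longrightarrow> lam x ^ 2 \<le> real p"
  shows "(\<Sum>p\<in>P. r_pp x p 1 ^ 2 / real p) \<le> 2 / ln (lam x ^ 2) ^ 2"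
proof -
  define L where "L = lam x ^ 2"
  have "0 < ln L" using assms(1) unfolding L_def by (simp add: ln_gt_zero)
  have "(\<Sum>p\<in>P. r_pp x p 1 ^ 2 / real p) \<le> (\<Sum>p\<in>P. L / ln L ^ 2 * (1 / real p ^ 2))"
    using assms r_pp_sq_div_le unfolding L_def by (intro sum_mono) auto
  also have "\<dots> = L / ln L ^ 2 * (\<Sum>p\<in>P. 1 / real p ^ 2)"
    by (simp add: sum_distrib_left)
  also have "\<dots> \<le> L / ln L ^ 2 * (1 / (L - 1))"
    using assms sum_inverse_squares_le[of P L] unfolding L_def by (intro mult_left_mono) auto
  also have "\<dots> \<le> 2 / ln L ^ 2"
    using assms(1) \<open>0 < ln L\<close> unfolding L_def by (simp add: field_simps)
  finally show ?thesis unfolding L_def .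
qed

lemma sum_abs_moebius_t_sq_div_le:
  assumes "2 \<le> lam x ^ 2" "finite D" "1 \<notin> D"
  shows "(\<Sum>d\<in>D. \<bar>moebius_mu d * t_fun x d ^ 2 / real d\<bar>) \<le> exp (2 / ln (lam x ^ 2) ^ 2) - 1"
proof -
  define a where "a p = r_pp x p 1 ^ 2 / real p" for p
  define P where "P = {p. lam x ^ 2 \<le> real p \<and> real p \<le> exp (ln (lam x) ^ 2)}"
  define D' where "D' = {d\<in>D. squarefree d}"
  have "finite P"
    by (rule finite_subset[of _ "{..nat \<lceil>exp (ln (lam x) ^ 2)\<rceil>}"])
       (auto simp: P_def le_nat_iff le_ceiling_iff)
  have "(\<Sum>d\<in>D. \<bar>moebius_mu d * t_fun x d ^ 2 / real d\<bar>)
      = (\<Sum>d\<in>D'. \<bar>moebius_mu d * t_fun x d ^ 2 / real d\<bar>)"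
    using assms(2) by (intro sum.mono_neutral_right) (auto simp: D'_def moebius_mu_def)
  also have "\<dots> \<le> (\<Sum>d\<in>D'. \<Prod>p\<in>prime_factors d. a p)"
    unfolding a_def by (intro sum_mono abs_moebius_t_sq_div_le)
  also have "\<dots> = (\<Sum>S\<in>prime_factors ` D'. \<Prod>p\<in>S. a p)"
    using inj_on_prime_factors_squarefree
    by (subst sum.reindex) (auto simp: D'_def intro: inj_on_subset)
  also have "\<dots> \<le> exp (\<Sum>p\<in>P. a p) - 1"
  proof (rule sum_prod_le_exp_sum_minus_1[OF \<open>finite P\<close>])
    show "p \<notin> P \<Longrightarrow> a p = 0" for p
      by (auto simp: a_def P_def r_pp_def)
    show "S \<in> prime_factors ` D' \<Longrightarrow> finite S \<and> S \<noteq> {}" for S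
      using assms(3) by (auto simp: D'_def prime_factorization_empty_iff)
  qed (simp add: a_def)
  also have "\<dots> \<le> exp (2 / ln (lam x ^ 2) ^ 2) - 1"
    using sum_r_pp_sq_div_le[OF assms(1) \<open>finite P\<close>] by (simp add: a_def P_def)
  finally show ?thesis .
qed

lemma moebius_t_sum_deviation_le:
  assumes "2 \<le> lam x ^ 2" "finite D" "1 \<in> D"
  shows "\<bar>(\<Sum>d\<in>D. moebius_mu d * t_fun x d ^ 2 / real d) - 1\<bar> \<le> exp (2 / ln (lam x ^ 2) ^ 2) - 1"
proof -
  have "moebius_mu 1 * t_fun x 1 ^ 2 / real 1 = 1"
    by (simp add: moebius_mu_def t_fun_def)
  then have "\<bar>(\<Sum>d\<in>D. moebius_mu d * t_fun x d ^ 2 / real d) - 1\<bar>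
      = \<bar>\<Sum>d\<in>D - {1}. moebius_mu d * t_fun x d ^ 2 / real d\<bar>"
    using assms(2,3) by (simp add: sum.remove)
  also have "\<dots> \<le> (\<Sum>d\<in>D - {1}. \<bar>moebius_mu d * t_fun x d ^ 2 / real d\<bar>)"
    by (rule sum_abs)
  also have "\<dots> \<le> exp (2 / ln (lam x ^ 2) ^ 2) - 1"
    using assms by (intro sum_abs_moebius_t_sq_div_le) auto
  finally show ?thesis .
qed

theorem mainTheorem13:
  shows "\<forall>\<epsilon>>0. \<forall>\<^sub>F x in at_top. \<forall>(y::real)\<ge>1. \<forall>k::nat. k \<ge> 1 \<longrightarrow>
     \<bar>(\<Sum>d\<in>{d::nat. 1 \<le> d \<and> real d \<le> y \<and> coprime d k}.
         moebius_mu d * (t_fun x d)^2 / real d) - 1\<bar> \<le> \<epsilon>"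
proof (intro allI impI)
  fix \<epsilon> :: real assume "\<epsilon> > 0"
  have "((\<lambda>x::real. exp (2 / ln (ln x * ln (ln x)) ^ 2) - 1) \<longlongrightarrow> 0) at_top"
    by real_asymp
  moreover have "filterlim (\<lambda>x::real. ln x * ln (ln x)) at_top at_top"
    by real_asymp
  ultimately have "\<forall>\<^sub>F x in at_top. exp (2 / ln (ln x * ln (ln x)) ^ 2) - 1 < \<epsilon> \<and> 2 \<le> ln x * ln (ln x)"
    using \<open>\<epsilon> > 0\<close> by (auto intro: eventually_conj order_tendstoD(2) simp: filterlim_at_top)
  then show "\<forall>\<^sub>F x in at_top. \<forall>(y::real)\<ge>1. \<forall>k::nat. k \<ge> 1 \<longrightarrow>
     \<bar>(\<Sum>d\<in>{d::nat. 1 \<le> d \<and> real d \<le> y \<and> coprime d k}.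
         moebius_mu d * (t_fun x d)^2 / real d) - 1\<bar> \<le> \<epsilon>"
  proof (rule eventually_mono, intro allI impI)
    fix x y :: real and k :: nat
    assume x: "exp (2 / ln (ln x * ln (ln x)) ^ 2) - 1 < \<epsilon> \<and> 2 \<le> ln x * ln (ln x)"
      and "1 \<le> y" "1 \<le> k"
    then have "lam x ^ 2 = ln x * ln (ln x)"
      by (simp add: lam_def)
    moreover have "finite {d::nat. 1 \<le> d \<and> real d \<le> y \<and> coprime d k}"
      by (rule finite_subset[of _ "{..nat \<lceil>y\<rceil>}"]) (auto simp: le_nat_iff le_ceiling_iff)
    ultimately show "\<bar>(\<Sum>d\<in>{d::nat. 1 \<le> d \<and> real d \<le> y \<and> coprime d k}.
         moebius_mu d * (t_fun x d)^2 / real d) - 1\<bar> \<le> \<epsilon>"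
      using moebius_t_sum_deviation_le[of x] x \<open>1 \<le> y\<close> by fastforce
  qed
qed

end
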